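(* Let $(X,\tau,I)$ be a $*$-extremally disconnected ideal topological space and $\gamma$ an operation on $\tau$ such that $(X,\tau)$ is $\gamma$-regular. For $V\subseteq X$ the following are equivalent: (1) $V$ is $\gamma$-open; (2) $V$ is $\alpha$-$I$-open and weakly $I$-local closed; (3) $V$ is pre-$\gamma$-$I$-open and weakly $I$-local closed; (4) $V$ is pre-$I$-open and weakly $I$-local closed; (5) $V$ is semi-$I$-open and weakly $I$-local closed; (6) $V$ is $b$-$I$-open and weakly $I$-local closed.
   Context: Let $(X,\tau)$ be a topological space; $Cl$ and $Int$ denote closure and interior in $\tau$. An ideal on $X$ is a nonempty family $I$ of subsets of $X$ such that $A\in I$, $B\subseteq A$ imply $B\in I$, and $A,B\in I$ imply $A\cup B\in I$; $(X,\tau,I)$ is then called an ideal topological space. An operation on $\tau$ is a map $\gamma:\tau\to P(X)$ with $V\subseteq\gamma(V)$ for all $V\in\tau$. A subset $A\subseteq X$ is $\gamma$-open if for every $x\in A$ there is $U\in\tau$ with $x\in U$ and $\gamma(U)\subseteq A$; $\tau_\gamma$ denotes the family of $\gamma$-open sets (so $\tau_\gamma\subseteq\tau$), and complements of $\gamma$-open sets are $\gamma$-closed. $\tau_\gamma\text{-}Int(A)$ is the union of all $\gamma$-open sets contained in $A$, and $\tau_\gamma\text{-}Cl(A)$ is the intersection of all $\gamma$-closed sets containing $A$. The local function of $A$ is $A^*=\{x\in X: U\cap A\notin I \text{ for every } U\in\tau \text{ with } x\in U\}$, and $Cl^*(A)=A\cup A^*$ (the closure operator of a topology $\tau^*$ finer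 than $\tau$). A subset $A$ is pre-$\gamma$-$I$-open if $A\subseteq \tau_\gamma\text{-}Int(Cl^*(A))$. The space $(X,\tau)$ is $\gamma$-regular if for each $x\in X$ and each open $V$ containing $x$ there is an open $U$ containing $x$ with $\gamma(U)\subseteq V$ (equivalently, $\tau_\gamma=\tau$). $(X,\tau,I)$ is $*$-extremally disconnected if $Cl^*(V)$ is open for every open $V\subseteq X$ (equivalently, $Cl^*(Int(V))\subseteq Int(Cl^*(V))$ for every $V\subseteq X$). A set $A$ is: $\alpha$-$I$-open if $A\subseteq Int(Cl^*(Int(A)))$; pre-$I$-open if $A\subseteq Int(Cl^*(A))$; semi-$I$-open if $A\subseteq Cl^*(Int(A))$; $b$-$I$-open if $A\subseteq Int(Cl^*(A))\cup Cl^*(Int(A))$; weakly $I$-local closed if $A=U\cap K$ for some open $U$ and some $\tau^*$-closed $K$ (i.e. $K^*\subseteq K$). *)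

theory Defs
  imports "HOL-Analysis.Analysis"
begin

definition is_ideal :: "'a topology \<Rightarrow> 'a set set \<Rightarrow> bool" where
  "is_ideal T I \<longleftrightarrow> I \<noteq> {} \<and> (\<forall>A\<in>I. A \<subseteq> topspace T) \<and>
     (\<forall>A B. A \<in> I \<and> B \<subseteq> A \<longrightarrow> B \<in> I) \<and> (\<forall>A B. A \<in> I \<and> B \<in> I \<longrightarrow> A \<union> B \<in> I)"

definition is_operation :: "'a topology \<Rightarrow> ('a set \<Rightarrow> 'a set) \<Rightarrow> bool" where
  "is_operation T g \<longleftrightarrow> (\<forall>V. openin T V \<longrightarrow> V \<subseteq> g V \<and> g V \<subseteq> topspace T)"

definition gamma_open :: "'a topology \<Rightarrow> ('a set \<Rightarrow> 'a set) \<Rightarrow> 'a set \<Rightarrow> bool" where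
  "gamma_open T g A \<longleftrightarrow> A \<subseteq> topspace T \<and>
     (\<forall>x\<in>A. \<exists>U. openin T U \<and> x \<in> U \<and> g U \<subseteq> A)"

definition gamma_interior :: "'a topology \<Rightarrow> ('a set \<Rightarrow> 'a set) \<Rightarrow> 'a set \<Rightarrow> 'a set" where
  "gamma_interior T g A = \<Union>{U. gamma_open T g U \<and> U \<subseteq> A}"

definition local_fun :: "'a topology \<Rightarrow> 'a set set \<Rightarrow> 'a set \<Rightarrow> 'a set" where
  "local_fun T I A = {x \<in> topspace T. \<forall>U. openin T U \<and> x \<in> U \<longrightarrow> U \<inter> A \<notin> I}"

definition cl_star :: "'a topology \<Rightarrow> 'a set set \<Rightarrow> 'a set \<Rightarrow> 'a set" where
  "cl_star T I A = A \<union> local_fun T I A"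

definition pre_gamma_I_open :: "'a topology \<Rightarrow> 'a set set \<Rightarrow> ('a set \<Rightarrow> 'a set) \<Rightarrow> 'a set \<Rightarrow> bool" where
  "pre_gamma_I_open T I g A \<longleftrightarrow> A \<subseteq> gamma_interior T g (cl_star T I A)"

definition gamma_regular :: "'a topology \<Rightarrow> ('a set \<Rightarrow> 'a set) \<Rightarrow> bool" where
  "gamma_regular T g \<longleftrightarrow> (\<forall>x V. openin T V \<and> x \<in> V \<longrightarrow> (\<exists>U. openin T U \<and> x \<in> U \<and> g U \<subseteq> V))"

definition star_extremally_disconnected :: "'a topology \<Rightarrow> 'a set set \<Rightarrow> bool" where
  "star_extremally_disconnected T I \<longleftrightarrow> (\<forall>V. openin T V \<longrightarrow> openin T (cl_star T I V))"

definition alpha_I_open :: "'a topology \<Rightarrow> 'a set set \<Rightarrow> 'a set \<Rightarrow> bool" where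
  "alpha_I_open T I A \<longleftrightarrow> A \<subseteq> T interior_of (cl_star T I (T interior_of A))"

definition pre_I_open :: "'a topology \<Rightarrow> 'a set set \<Rightarrow> 'a set \<Rightarrow> bool" where
  "pre_I_open T I A \<longleftrightarrow> A \<subseteq> T interior_of (cl_star T I A)"

definition semi_I_open :: "'a topology \<Rightarrow> 'a set set \<Rightarrow> 'a set \<Rightarrow> bool" where
  "semi_I_open T I A \<longleftrightarrow> A \<subseteq> cl_star T I (T interior_of A)"

definition b_I_open :: "'a topology \<Rightarrow> 'a set set \<Rightarrow> 'a set \<Rightarrow> bool" where
  "b_I_open T I A \<longleftrightarrow> A \<subseteq> T interior_of (cl_star T I A) \<union> cl_star T I (T interior_of A)"

text \<open>Weakly I-local closed: A = U \<inter> K, U open, K \<tau>*-closed (K* \<subseteq> K), K \<subseteq> X.\<close>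
definition weakly_I_local_closed :: "'a topology \<Rightarrow> 'a set set \<Rightarrow> 'a set \<Rightarrow> bool" where
  "weakly_I_local_closed T I A \<longleftrightarrow>
     (\<exists>U K. openin T U \<and> K \<subseteq> topspace T \<and> local_fun T I K \<subseteq> K \<and> A = U \<inter> K)"

end

theory Submission
  imports Defs
begin

text \<open>Under \<gamma>-regularity the \<gamma>-open sets are exactly the open sets. Every class in the
theorem contains the open sets and is contained in the b-I-open sets, so it suffices that a
b-I-open, weakly I-local closed set V = U \<inter> K is open. In a *-extremally disconnected space
Cl*(Int V) \<subseteq> Int(Cl* V), so V is pre-I-open; and as K is \<tau>*-closed, Cl* V \<subseteq> K, whence
V = U \<inter> Int(Cl* V).\<close>

lemma gamma_open_imp_openin:
  assumes "is_operation T g" "gamma_open T g V"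
  shows "openin T V"
proof (subst openin_subopen, intro ballI)
  fix x assume "x \<in> V"
  then obtain U where U: "openin T U" "x \<in> U" "g U \<subseteq> V"
    using assms(2) unfolding gamma_open_def by blast
  moreover have "U \<subseteq> g U" using assms(1) U(1) unfolding is_operation_def by blast
  ultimately show "\<exists>U. openin T U \<and> x \<in> U \<and> U \<subseteq> V" by blast
qed

lemma openin_imp_gamma_open:
  assumes "gamma_regular T g" "openin T V"
  shows "gamma_open T g V"
  using assms openin_subset unfolding gamma_open_def gamma_regular_def by blast

lemma gamma_open_iff_openin:
  assumes "is_operation T g" "gamma_regular T g"
  shows "gamma_open T g V \<longleftrightarrow> openin T V"
  using assms gamma_open_imp_openin openin_imp_gamma_open by blast

lemma gamma_interior_subset_interior_of:
  assumes "is_operation T g"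
  shows "gamma_interior T g A \<subseteq> T interior_of A"
  unfolding gamma_interior_def
  using gamma_open_imp_openin[OF assms] interior_of_maximal by blast

lemma local_fun_mono:
  assumes "is_ideal T I" "A \<subseteq> B"
  shows "local_fun T I A \<subseteq> local_fun T I B"
proof -
  have "U \<inter> A \<in> I" if "U \<inter> B \<in> I" for U
    using assms that unfolding is_ideal_def by (meson Int_mono order_refl)
  then show ?thesis unfolding local_fun_def by blast
qed

lemma cl_star_mono:
  assumes "is_ideal T I" "A \<subseteq> B"
  shows "cl_star T I A \<subseteq> cl_star T I B"
  using local_fun_mono[OF assms] assms(2) unfolding cl_star_def by blast

lemma subset_cl_star: "A \<subseteq> cl_star T I A"
  unfolding cl_star_def by blast

lemma cl_star_minimal:
  assumes "is_ideal T I" "A \<subseteq> K" "local_fun T I K \<subseteq> K"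
  shows "cl_star T I A \<subseteq> K"
  using cl_star_mono[OF assms(1,2)] assms(3) unfolding cl_star_def by blast

lemma star_extremally_disconnected_cl_star_interior_of:
  assumes "is_ideal T I" "star_extremally_disconnected T I"
  shows "cl_star T I (T interior_of A) \<subseteq> T interior_of (cl_star T I A)"
proof (rule interior_of_maximal)
  show "cl_star T I (T interior_of A) \<subseteq> cl_star T I A"
    by (rule cl_star_mono[OF assms(1) interior_of_subset])
  show "openin T (cl_star T I (T interior_of A))"
    using assms(2) unfolding star_extremally_disconnected_def by simp
qed

lemma b_I_open_imp_pre_I_open:
  assumes "is_ideal T I" "star_extremally_disconnected T I" "b_I_open T I V"
  shows "pre_I_open T I V"
  using assms(3) star_extremally_disconnected_cl_star_interior_of[OF assms(1,2), of V]
  unfolding b_I_open_def pre_I_open_def by blast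

lemma pre_I_open_weakly_I_local_closed_imp_openin:
  assumes "is_ideal T I" "pre_I_open T I V" "weakly_I_local_closed T I V"
  shows "openin T V"
proof -
  obtain U K where U: "openin T U" and K: "local_fun T I K \<subseteq> K" and V: "V = U \<inter> K"
    using assms(3) unfolding weakly_I_local_closed_def by blast
  have "cl_star T I V \<subseteq> K" using cl_star_minimal[OF assms(1) _ K] V by blast
  then have "V = U \<inter> T interior_of (cl_star T I V)"
    using assms(2) V interior_of_subset[of T "cl_star T I V"] unfolding pre_I_open_def by blast
  then show ?thesis using U by (metis openin_Int openin_interior_of)
qed

lemma openin_imp_weakly_I_local_closed:
  assumes "openin T V"
  shows "weakly_I_local_closed T I V"
  unfolding weakly_I_local_closed_def local_fun_def
  using assms openin_subset[OF assms] by (intro exI[of _ V] exI[of _ "topspace T"]) auto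

lemma openin_imp_pre_I_open:
  assumes "openin T V"
  shows "pre_I_open T I V"
  using assms subset_cl_star interior_of_maximal unfolding pre_I_open_def by metis

lemma openin_imp_alpha_I_open:
  assumes "openin T V"
  shows "alpha_I_open T I V"
  using openin_imp_pre_I_open[OF assms]
  unfolding alpha_I_open_def pre_I_open_def interior_of_openin[OF assms] .

lemma openin_imp_semi_I_open:
  assumes "openin T V"
  shows "semi_I_open T I V"
  unfolding semi_I_open_def interior_of_openin[OF assms] by (rule subset_cl_star)

lemma openin_imp_pre_gamma_I_open:
  assumes "gamma_regular T g" "openin T V"
  shows "pre_gamma_I_open T I g V"
  unfolding pre_gamma_I_open_def gamma_interior_def
  using openin_imp_gamma_open[OF assms] subset_cl_star[of V T I] by (intro Union_upper) simp

lemma alpha_I_open_imp_b_I_open: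
  assumes "is_ideal T I" "alpha_I_open T I V"
  shows "b_I_open T I V"
proof -
  have "T interior_of (cl_star T I (T interior_of V)) \<subseteq> T interior_of (cl_star T I V)"
    by (intro interior_of_mono cl_star_mono[OF assms(1)] interior_of_subset)
  then show ?thesis using assms(2) unfolding alpha_I_open_def b_I_open_def by blast
qed

lemma pre_gamma_I_open_imp_b_I_open:
  assumes "is_operation T g" "pre_gamma_I_open T I g V"
  shows "b_I_open T I V"
  using assms(2) gamma_interior_subset_interior_of[OF assms(1)]
  unfolding pre_gamma_I_open_def b_I_open_def by blast

lemma pre_I_open_imp_b_I_open: "pre_I_open T I V \<Longrightarrow> b_I_open T I V"
  unfolding pre_I_open_def b_I_open_def by blast

lemma semi_I_open_imp_b_I_open: "semi_I_open T I V \<Longrightarrow> b_I_open T I V"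
  unfolding semi_I_open_def b_I_open_def by blast

lemma openin_iff_b_I_open_weakly_I_local_closed:
  assumes "is_ideal T I" "star_extremally_disconnected T I"
  shows "openin T V \<longleftrightarrow> b_I_open T I V \<and> weakly_I_local_closed T I V"
proof
  assume "openin T V"
  then show "b_I_open T I V \<and> weakly_I_local_closed T I V"
    by (simp add: openin_imp_pre_I_open pre_I_open_imp_b_I_open openin_imp_weakly_I_local_closed)
next
  assume "b_I_open T I V \<and> weakly_I_local_closed T I V"
  then show "openin T V"
    using b_I_open_imp_pre_I_open[OF assms] pre_I_open_weakly_I_local_closed_imp_openin[OF assms(1)]
    by blast
qed

theorem theorem3p34:
  fixes T :: "'a topology" and I :: "'a set set" and g :: "'a set \<Rightarrow> 'a set" and V :: "'a set"
  assumes "is_ideal T I"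
    and "star_extremally_disconnected T I"
    and "is_operation T g"
    and "gamma_regular T g"
    and "V \<subseteq> topspace T"
  shows "(gamma_open T g V \<longleftrightarrow> alpha_I_open T I V \<and> weakly_I_local_closed T I V)
       \<and> (gamma_open T g V \<longleftrightarrow> pre_gamma_I_open T I g V \<and> weakly_I_local_closed T I V)
       \<and> (gamma_open T g V \<longleftrightarrow> pre_I_open T I V \<and> weakly_I_local_closed T I V)
       \<and> (gamma_open T g V \<longleftrightarrow> semi_I_open T I V \<and> weakly_I_local_closed T I V)
       \<and> (gamma_open T g V \<longleftrightarrow> b_I_open T I V \<and> weakly_I_local_closed T I V)"
proof -
  have sandwich: "gamma_open T g V \<longleftrightarrow> P \<and> weakly_I_local_closed T I V"
    if P_open: "openin T V \<Longrightarrow> P" and P_b: "P \<Longrightarrow> b_I_open T I V" for P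
  proof -
    have "openin T V \<longleftrightarrow> P \<and> weakly_I_local_closed T I V"
    proof
      assume "openin T V"
      then show "P \<and> weakly_I_local_closed T I V"
        by (simp add: P_open openin_imp_weakly_I_local_closed)
    next
      assume "P \<and> weakly_I_local_closed T I V"
      then show "openin T V"
        using P_b openin_iff_b_I_open_weakly_I_local_closed[OF assms(1,2)] by blast
    qed
    then show ?thesis using gamma_open_iff_openin[OF assms(3,4)] by simp
  qed
  show ?thesis
  proof (intro conjI)
    show "gamma_open T g V \<longleftrightarrow> alpha_I_open T I V \<and> weakly_I_local_closed T I V"
      by (rule sandwich, erule openin_imp_alpha_I_open,
          erule alpha_I_open_imp_b_I_open[OF assms(1)])
    show "gamma_open T g V \<longleftrightarrow> pre_gamma_I_open T I g V \<and> weakly_I_local_closed T I V"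
      by (rule sandwich, erule openin_imp_pre_gamma_I_open[OF assms(4)],
          erule pre_gamma_I_open_imp_b_I_open[OF assms(3)])
    show "gamma_open T g V \<longleftrightarrow> pre_I_open T I V \<and> weakly_I_local_closed T I V"
      by (rule sandwich, erule openin_imp_pre_I_open, erule pre_I_open_imp_b_I_open)
    show "gamma_open T g V \<longleftrightarrow> semi_I_open T I V \<and> weakly_I_local_closed T I V"
      by (rule sandwich, erule openin_imp_semi_I_open, erule semi_I_open_imp_b_I_open)
    show "gamma_open T g V \<longleftrightarrow> b_I_open T I V \<and> weakly_I_local_closed T I V"
      by (rule sandwich, erule openin_imp_pre_I_open[THEN pre_I_open_imp_b_I_open])
  qed
qed

end
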